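(* For every $[\rho]\in\mathcal{P}_5$ and every $t\in\mathbb{R}$, one has $\Phi^t_{a_1}([\rho])\in\mathcal{P}_5$ and $\Phi^t_{[a_1,b_1]}([\rho])\in\mathcal{P}_5$.
   Context: $S$ closed oriented genus 2, $\pi_1S=\langle a_1,b_1,a_2,b_2 : [a_1,b_1][a_2,b_2]=1\rangle$, $\Gamma=\langle q_1,\dots,q_6: q_i^2=1, q_1\cdots q_6=1\rangle\supset\pi_1S$ via $a_1\mapsto q_3q_2$, $b_1\mapsto q_1q_2$, $a_2\mapsto q_6q_5$, $b_2\mapsto q_4q_5$. $\mathcal{P}_5\subset\chi(S,\mathrm{PSL}_2(\mathbb{R}))$ is the set of conjugacy classes of restrictions to $\pi_1S$ of representations $\bar\rho\colon\Gamma\to\mathrm{PSL}_2(\mathbb{R})$ whose kernel contains $q_5$ and no other $q_i$; for such $\rho$, $\rho(a_1),\rho(b_1),\rho([a_1,b_1])$ are hyperbolic and $\rho(a_2),\rho(b_2)$ are elliptic of angle $\pi$. Let $U$ be the open set of classes with Euler number $\pm1$ for which $\rho(a_1)$ and $\rho([a_1,b_1])$ are hyperbolic; for $x\in\{a_1,[a_1,b_1]\}$, $\ell_x\colon U\to\mathbb{R}_{>0}$ is the translation length of $\rho(x)$ and $\Phi^t_x$ its Hamiltonian flow for the Goldman symplectic form. Concretely, writing $\xi_\rho(t)$, $\zeta_\rho(t)$ for the one-parameter groups of hyperbolic elements with the same axes as $\rho(a_1)$, resp. $\rho([a_1,b_1])$, translating by $t$ (so $\rho(a_1)=\xi_\rho(\ell_{a_1})$,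 $\rho([a_1,b_1])=\zeta_\rho(\ell_{[a_1,b_1]})$), $\Phi^t_{a_1}$ lifts to $a_1\mapsto\rho(a_1)$, $b_1\mapsto\rho(b_1)\xi_\rho(t)^{-1}$, $a_2\mapsto\rho(a_2)$, $b_2\mapsto\rho(b_2)$, and $\Phi^t_{[a_1,b_1]}$ lifts to $a_1\mapsto\rho(a_1)$, $b_1\mapsto\rho(b_1)$, $a_2\mapsto\zeta_\rho(t)\rho(a_2)\zeta_\rho(t)^{-1}$, $b_2\mapsto\zeta_\rho(t)\rho(b_2)\zeta_\rho(t)^{-1}$. *)

theory Defs
  imports "HOL-Analysis.Analysis"
begin

text \<open>Elements of PSL(2,R) are represented by lifts in SL(2,R) (real 2x2 matrices
of determinant 1); two lifts represent the same element of PSL(2,R) iff they agree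
up to sign.\<close>

type_synonym mat2 = "real^2^2"

definition psl_eq :: "mat2 \<Rightarrow> mat2 \<Rightarrow> bool" where
  "psl_eq A B \<longleftrightarrow> A = B \<or> A = - B"

definition comm :: "mat2 \<Rightarrow> mat2 \<Rightarrow> mat2" where
  "comm A B = A ** B ** matrix_inv A ** matrix_inv B"

definition hyperbolic :: "mat2 \<Rightarrow> bool" where
  "hyperbolic A \<longleftrightarrow> det A = 1 \<and> \<bar>trace A\<bar> > 2"

definition transl_len :: "mat2 \<Rightarrow> real" where
  "transl_len A = 2 * arcosh (\<bar>trace A\<bar> / 2)"

definition diag2 :: "real \<Rightarrow> real \<Rightarrow> mat2" where
  "diag2 a b = (\<chi> i j. if i = j then (if i = 1 then a else b) else 0)"

text \<open>The one-parameter group of hyperbolic elements with the same axis (and the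
same translation direction) as the hyperbolic element A, translating by t; it
satisfies one_par A (transl_len A) = A in PSL(2,R).  It is well defined since the
diagonalising matrix P is unique up to right multiplication by diagonal matrices.\<close>
definition one_par :: "mat2 \<Rightarrow> real \<Rightarrow> mat2" where
  "one_par A t = (SOME M. \<exists>P. invertible P \<and>
      psl_eq (P ** diag2 (exp (transl_len A / 2)) (exp (- transl_len A / 2)) ** matrix_inv P) A \<and>
      M = P ** diag2 (exp (t / 2)) (exp (- t / 2)) ** matrix_inv P)"

datatype gen = a1 | b1 | a2 | b2

text \<open>A representation pi_1 S \<rightarrow> PSL(2,R), given by SL(2,R)-lifts of the images of
the generators satisfying [a1,b1][a2,b2] = 1 in PSL(2,R).\<close>
definition surface_rep :: "(gen \<Rightarrow> mat2) \<Rightarrow> bool" where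
  "surface_rep \<rho> \<longleftrightarrow> (\<forall>g. det (\<rho> g) = 1) \<and>
     psl_eq (comm (\<rho> a1) (\<rho> b1) ** comm (\<rho> a2) (\<rho> b2)) (mat 1)"

text \<open>A representation Gamma \<rightarrow> PSL(2,R), given by SL(2,R)-lifts Q 1, ..., Q 6 of the
images of q_1, ..., q_6 (values at other indices are irrelevant).\<close>
definition orbifold_rep :: "(nat \<Rightarrow> mat2) \<Rightarrow> bool" where
  "orbifold_rep Q \<longleftrightarrow> (\<forall>i\<in>{1..6}. det (Q i) = 1 \<and> psl_eq (Q i ** Q i) (mat 1)) \<and>
     psl_eq (Q 1 ** Q 2 ** Q 3 ** Q 4 ** Q 5 ** Q 6) (mat 1)"

definition restrict_rep :: "(nat \<Rightarrow> mat2) \<Rightarrow> gen \<Rightarrow> mat2" where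
  "restrict_rep Q g = (case g of
      a1 \<Rightarrow> Q 3 ** Q 2 | b1 \<Rightarrow> Q 1 ** Q 2 | a2 \<Rightarrow> Q 6 ** Q 5 | b2 \<Rightarrow> Q 4 ** Q 5)"

definition conj_equiv :: "(gen \<Rightarrow> mat2) \<Rightarrow> (gen \<Rightarrow> mat2) \<Rightarrow> bool" where
  "conj_equiv \<rho> \<sigma> \<longleftrightarrow> (\<exists>C. det C = 1 \<and> (\<forall>g. psl_eq (C ** \<rho> g ** matrix_inv C) (\<sigma> g)))"

definition in_P5 :: "(gen \<Rightarrow> mat2) \<Rightarrow> bool" where
  "in_P5 \<rho> \<longleftrightarrow> surface_rep \<rho> \<and>
     (\<exists>Q. orbifold_rep Q \<and> psl_eq (Q 5) (mat 1) \<and>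
          (\<forall>i\<in>{1..6}. i \<noteq> 5 \<longrightarrow> \<not> psl_eq (Q i) (mat 1)) \<and>
          conj_equiv (restrict_rep Q) \<rho>)"

text \<open>Lifts of the Hamiltonian flows of l_{a1} and l_{[a1,b1]}.\<close>
definition flow_a1 :: "real \<Rightarrow> (gen \<Rightarrow> mat2) \<Rightarrow> gen \<Rightarrow> mat2" where
  "flow_a1 t \<rho> = \<rho>(b1 := \<rho> b1 ** matrix_inv (one_par (\<rho> a1) t))"

definition flow_comm :: "real \<Rightarrow> (gen \<Rightarrow> mat2) \<Rightarrow> gen \<Rightarrow> mat2" where
  "flow_comm t \<rho> = (let Z = one_par (comm (\<rho> a1) (\<rho> b1)) t in
     \<rho>(a2 := Z ** \<rho> a2 ** matrix_inv Z, b2 := Z ** \<rho> b2 ** matrix_inv Z))"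

end

(* Every class in P_5 has a normal lift: half-turns Q1, Q2, Q3, Q4, Q6 in SL(2,R) (Q^2 = -1)
   with Q1 Q2 Q3 Q4 Q6 = +-1, giving a1 = Q3 Q2, b1 = Q1 Q2, a2 = Q6, b2 = Q4 up to sign;
   conversely such data always defines a class in P_5, since [a1,b1] = -(Q4 Q6)^2 and
   [a2,b2] = (Q4 Q6)^-2.  Half-turns are unit timelike vectors for the Lorentzian form -det on
   trace-free matrices, so by the reverse Cauchy-Schwarz inequality |tr(Q R)| >= 2 with equality
   only for R = +-Q; as no three half-turns multiply to +-1, both Q3 Q2 and Q4 Q6 are hyperbolic.
   The one-parameter group through a hyperbolic A consists of matrices alpha + beta A.  Hence the
   flow of l_a1, which replaces b1 by b1 M^-1 with M in the group of Q3 Q2, is realised by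
   replacing Q2, Q3 by Q2 M^-1, Q3 M^-1: these are still half-turns because Q2 and Q3 invert
   Q3 Q2, so that M^-1 Q M^-1 = Q.  The flow of l_[a1,b1] is realised by conjugating Q4 and Q6
   with an element of the group of (Q4 Q6)^2, which commutes with Q4 Q6 and so keeps the
   relation. *)

theory Submission
  imports Defs
begin

section \<open>Matrix algebra\<close>

lemma matrix_mul_uminus_left: "(- A) ** B = - (A ** (B::'a::ring_1^'p^'n))"
  by (simp add: matrix_matrix_mult_def vec_eq_iff sum_negf)

lemma matrix_mul_uminus_right: "A ** (- B) = - (A ** (B::'a::ring_1^'p^'n))"
  by (simp add: matrix_matrix_mult_def vec_eq_iff sum_negf)

lemma matrix_add_rdistrib: "(A + B) ** C = A ** C + B ** (C::'a::semiring_1^'p^'n)"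
  by (simp add: matrix_matrix_mult_def vec_eq_iff sum.distrib distrib_right)

lemma matrix_mul_scaleR_left [simp]:
  "(k *\<^sub>R A) ** B = k *\<^sub>R (A ** (B::'a::real_algebra_1^'p^'m))"
  by (simp add: scalar_matrix_assoc)

lemma matrix_mul_scaleR_right [simp]:
  "A ** (k *\<^sub>R B) = k *\<^sub>R (A ** (B::'a::real_algebra_1^'p^'m))"
  by (metis matrix_scalar_ac scalar_matrix_assoc)

lemma matrix_inv_right:
  fixes A :: "'a::semiring_1^'n^'m"
  assumes "invertible A"
  shows "A ** matrix_inv A = mat 1"
  using someI_ex[OF assms[unfolded invertible_def]] unfolding matrix_inv_def by blast

lemma matrix_inv_left:
  fixes A :: "'a::semiring_1^'n^'m"
  assumes "invertible A"
  shows "matrix_inv A ** A = mat 1"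
  using someI_ex[OF assms[unfolded invertible_def]] unfolding matrix_inv_def by blast

lemma matrix_inv_unique:
  fixes A :: "'a::semiring_1^'n^'m"
  assumes "A ** B = mat 1" "B ** A = mat 1"
  shows "matrix_inv A = B"
proof -
  have "invertible A" using assms unfolding invertible_def by blast
  then have "matrix_inv A = (matrix_inv A ** A) ** B"
    using assms(1) by (simp add: matrix_mul_assoc[symmetric])
  then show ?thesis by (simp add: matrix_inv_left \<open>invertible A\<close>)
qed

lemma matrix_inv_mult:
  fixes A B :: "'a::semiring_1^'n^'n"
  assumes "invertible A" "invertible B"
  shows "matrix_inv (A ** B) = matrix_inv B ** matrix_inv A"
proof (rule matrix_inv_unique)
  have "A ** B ** (matrix_inv B ** matrix_inv A) = A ** (B ** matrix_inv B) ** matrix_inv A"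
    by (simp add: matrix_mul_assoc)
  then show "A ** B ** (matrix_inv B ** matrix_inv A) = mat 1"
    using assms by (simp add: matrix_inv_right)
  have "matrix_inv B ** matrix_inv A ** (A ** B) = matrix_inv B ** (matrix_inv A ** A) ** B"
    by (simp add: matrix_mul_assoc)
  then show "matrix_inv B ** matrix_inv A ** (A ** B) = mat 1"
    using assms by (simp add: matrix_inv_left)
qed

lemma matrix_inv_uminus:
  fixes A :: "'a::ring_1^'n^'n"
  assumes "invertible A"
  shows "matrix_inv (- A) = - matrix_inv A"
  using assms
  by (intro matrix_inv_unique) (simp_all add: matrix_mul_uminus_left matrix_mul_uminus_right
      matrix_inv_left matrix_inv_right)

lemma det_matrix_inv:
  fixes A :: "'a::field^'n^'n"
  assumes "invertible A"
  shows "det (matrix_inv A) = inverse (det A)"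
proof -
  have "det A * det (matrix_inv A) = 1"
    by (metis assms det_I det_mul matrix_inv_right)
  then show ?thesis by (rule inverse_unique[symmetric])
qed

lemma invertible_det1: "det (A::'a::field^'n^'n) = 1 \<Longrightarrow> invertible A"
  by (simp add: invertible_det_nz)

lemma matrix_inv_cancel_left:
  fixes C :: "'a::semiring_1^'n^'m"
  assumes "invertible C"
  shows "matrix_inv C ** (C ** X) = X"
  using assms by (simp add: matrix_mul_assoc matrix_inv_left)

lemma conj_mult:
  fixes C :: "'a::semiring_1^'n^'n"
  assumes "invertible C"
  shows "(C ** X ** matrix_inv C) ** (C ** Y ** matrix_inv C) = C ** (X ** Y) ** matrix_inv C"
  using assms by (simp add: matrix_mul_assoc[symmetric] matrix_inv_cancel_left)

lemma conj_mult_commuting: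
  fixes Z :: "'a::semiring_1^'n^'n"
  assumes "invertible Z" "A ** B ** Z = Z ** (A ** B)"
  shows "(Z ** A ** matrix_inv Z) ** (Z ** B ** matrix_inv Z) = A ** B"
proof -
  have "Z ** (A ** B) ** matrix_inv Z = A ** B ** (Z ** matrix_inv Z)"
    using assms(2) by (simp add: matrix_mul_assoc)
  then show ?thesis using assms(1) by (simp add: conj_mult matrix_inv_right)
qed

lemma det_conj:
  fixes P X :: "'a::field^'n^'n"
  assumes "invertible P"
  shows "det (P ** X ** matrix_inv P) = det X"
  using assms by (simp add: det_mul det_matrix_inv invertible_det_nz)

lemma trace_scaleR: "trace (c *\<^sub>R A) = c * trace (A::real^'n^'n)"
  by (simp add: trace_def sum_distrib_left)

lemma trace_uminus: "trace (- A) = - trace (A::'a::comm_ring_1^'n^'n)"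
  by (simp add: trace_def sum_negf)

definition matrix2 :: "real \<Rightarrow> real \<Rightarrow> real \<Rightarrow> real \<Rightarrow> mat2" where
  "matrix2 a b c d = (\<chi> i j. if i = 1 then (if j = 1 then a else b) else (if j = 1 then c else d))"

lemma matrix2_cases: obtains a b c d where "A = matrix2 a b c d"
proof
  show "A = matrix2 (A$1$1) (A$1$2) (A$2$1) (A$2$2)"
    by (simp add: vec_eq_iff matrix2_def forall_2)
qed

lemma matrix2_mult [simp]:
  "matrix2 a b c d ** matrix2 a' b' c' d' =
     matrix2 (a*a' + b*c') (a*b' + b*d') (c*a' + d*c') (c*b' + d*d')"
  by (simp add: matrix2_def matrix_matrix_mult_def vec_eq_iff forall_2 sum_2)

lemma matrix2_eq_iff [simp]:
  "matrix2 a b c d = matrix2 a' b' c' d' \<longleftrightarrow> a = a' \<and> b = b' \<and> c = c' \<and> d = d'"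
  by (simp add: matrix2_def vec_eq_iff forall_2)

lemma mat1_matrix2: "mat 1 = matrix2 1 0 0 1"
  by (simp add: matrix2_def mat_def vec_eq_iff forall_2)

lemma matrix2_uminus [simp]: "- matrix2 a b c d = matrix2 (-a) (-b) (-c) (-d)"
  by (simp add: matrix2_def vec_eq_iff forall_2)

lemma matrix2_add [simp]:
  "matrix2 a b c d + matrix2 a' b' c' d' = matrix2 (a+a') (b+b') (c+c') (d+d')"
  by (simp add: matrix2_def vec_eq_iff forall_2)

lemma matrix2_diff [simp]:
  "matrix2 a b c d - matrix2 a' b' c' d' = matrix2 (a-a') (b-b') (c-c') (d-d')"
  by (simp add: matrix2_def vec_eq_iff forall_2)

lemma matrix2_scaleR [simp]: "k *\<^sub>R matrix2 a b c d = matrix2 (k*a) (k*b) (k*c) (k*d)"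
  by (simp add: matrix2_def vec_eq_iff forall_2)

lemma det_matrix2 [simp]: "det (matrix2 a b c d) = a*d - b*c"
  by (simp add: det_2 matrix2_def)

lemma trace_matrix2 [simp]: "trace (matrix2 a b c d) = a + d"
  by (simp add: trace_def sum_2 matrix2_def)

lemma diag2_matrix2: "diag2 a b = matrix2 a 0 0 b"
  by (simp add: diag2_def matrix2_def vec_eq_iff forall_2)

lemma cayley_hamilton_2: "(A::mat2) ** A = trace A *\<^sub>R A - det A *\<^sub>R mat (1::real)"
  by (cases A rule: matrix2_cases) (simp add: mat1_matrix2 algebra_simps)

lemma matrix_inv_det1:
  assumes "det (A::mat2) = 1"
  shows "matrix_inv A = trace A *\<^sub>R mat 1 - A"
  by (rule matrix_inv_unique; cases A rule: matrix2_cases)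
    (use assms in \<open>simp_all add: mat1_matrix2 algebra_simps\<close>)

lemma matrix_inv_affine:
  assumes "det A = 1" "det (\<alpha> *\<^sub>R mat 1 + \<beta> *\<^sub>R A) = 1"
  shows "matrix_inv (\<alpha> *\<^sub>R mat 1 + \<beta> *\<^sub>R A) = \<alpha> *\<^sub>R mat 1 + \<beta> *\<^sub>R matrix_inv (A::mat2)"
  unfolding matrix_inv_det1[OF assms(1)] matrix_inv_det1[OF assms(2)]
  by (cases A rule: matrix2_cases) (simp add: mat1_matrix2 algebra_simps)

lemma trace_square: "trace (A ** A) = (trace A)\<^sup>2 - 2 * det (A::mat2)"
  by (cases A rule: matrix2_cases) (simp add: power2_eq_square algebra_simps)

lemma psl_eq_refl [simp]: "psl_eq A A"
  by (simp add: psl_eq_def)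

lemma psl_eq_sym: "psl_eq A B \<Longrightarrow> psl_eq B A"
  by (auto simp: psl_eq_def)

lemma psl_eq_trans: "psl_eq A B \<Longrightarrow> psl_eq B C \<Longrightarrow> psl_eq A C"
  by (auto simp: psl_eq_def)

lemma psl_eq_uminus_right: "psl_eq A (- B) \<longleftrightarrow> psl_eq A B"
  by (auto simp: psl_eq_def)

lemma psl_eq_mult: "psl_eq A A' \<Longrightarrow> psl_eq B B' \<Longrightarrow> psl_eq (A ** B) (A' ** B')"
  by (auto simp: psl_eq_def matrix_mul_uminus_left matrix_mul_uminus_right)

lemma psl_eq_conj: "psl_eq X Y \<Longrightarrow> psl_eq (C ** X ** matrix_inv C) (C ** Y ** matrix_inv C)"
  by (auto simp: psl_eq_def matrix_mul_uminus_left matrix_mul_uminus_right)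

lemma comm_psl_eq:
  assumes "psl_eq A A'" "psl_eq B B'" "invertible A'" "invertible B'"
  shows "comm A B = comm A' B'"
  using assms unfolding psl_eq_def comm_def
  by (auto simp: matrix_inv_uminus matrix_mul_uminus_left matrix_mul_uminus_right)

section \<open>Half-turns\<close>

definition half_turn :: "mat2 \<Rightarrow> bool" where
  "half_turn Q \<longleftrightarrow> det Q = 1 \<and> Q ** Q = - mat 1"

lemma half_turn_mult_self: "half_turn Q \<Longrightarrow> Q ** Q = - mat 1"
  by (simp add: half_turn_def)

lemma half_turn_mult_self_assoc: "half_turn Q \<Longrightarrow> Q ** (Q ** X) = - X"
  unfolding half_turn_def by (simp add: matrix_mul_assoc matrix_mul_uminus_left)

lemma invertible_half_turn: "half_turn Q \<Longrightarrow> invertible Q"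
  by (simp add: half_turn_def invertible_det1)

lemma half_turn_iff_trace: "half_turn Q \<longleftrightarrow> det Q = 1 \<and> trace Q = 0"
proof (cases "det Q = 1")
  case True
  have "Q \<noteq> 0" using True by (auto simp: det_2)
  moreover have "Q ** Q = trace Q *\<^sub>R Q - mat 1"
    using cayley_hamilton_2[of Q] True by simp
  then have "Q ** Q = - mat 1 \<longleftrightarrow> trace Q *\<^sub>R Q = 0"
    by (simp add: diff_eq_eq)
  ultimately show ?thesis using True unfolding half_turn_def by simp
qed (simp add: half_turn_def)

lemma matrix_inv_half_turn: "half_turn Q \<Longrightarrow> matrix_inv Q = - Q"
  by (simp add: half_turn_iff_trace matrix_inv_det1)

lemma half_turn_if_order_two:
  assumes "det Q = 1" "psl_eq (Q ** Q) (mat 1)" "\<not> psl_eq Q (mat 1)"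
  shows "half_turn Q"
proof -
  have "Q ** Q \<noteq> mat 1"
  proof
    assume "Q ** Q = mat 1"
    then have tQ: "trace Q *\<^sub>R Q = mat 1 + mat 1"
      using cayley_hamilton_2[of Q] assms(1) by (simp add: algebra_simps)
    have "trace Q * trace Q = trace (mat 1 + mat 1 :: mat2)"
      using arg_cong[OF tQ, of trace] by (simp only: trace_scaleR)
    then have "trace Q * trace Q = 2 * 2"
      by (simp only: trace_add trace_I) simp
    then have "trace Q = 2 \<or> trace Q = -2"
      by (simp only: square_eq_iff)
    moreover have "(trace Q / 2) *\<^sub>R Q = mat 1"
      using arg_cong[OF tQ, of "scaleR (1/2)"] by (simp flip: scaleR_2)
    ultimately have "Q = mat 1 \<or> - Q = mat 1" by auto
    then show False using assms(3) unfolding psl_eq_def by (metis minus_minus)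
  qed
  then show ?thesis using assms(1,2) unfolding psl_eq_def half_turn_def by simp
qed

lemma half_turn_not_psl_eq_one: "half_turn Q \<Longrightarrow> \<not> psl_eq Q (mat 1)"
  by (auto simp: half_turn_def psl_eq_def matrix_mul_uminus_left matrix_mul_uminus_right
      mat1_matrix2)

lemma half_turn_conj:
  assumes "invertible C" "half_turn X"
  shows "half_turn (C ** X ** matrix_inv C)"
  using assms unfolding half_turn_def
  by (simp add: det_conj conj_mult matrix_mul_uminus_left matrix_mul_uminus_right matrix_inv_right)

lemma half_turn_mult_sandwich:
  assumes "half_turn Y" "N ** Y ** N = Y" "det N = 1"
  shows "half_turn (Y ** N)"
proof -
  have "Y ** N ** (Y ** N) = Y ** (N ** Y ** N)" by (simp add: matrix_mul_assoc)
  then show ?thesis using assms unfolding half_turn_def by (simp add: det_mul)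
qed

lemma timelike_lagrange:
  fixes p a b r x y :: real
  assumes "p\<^sup>2 = 1 + a\<^sup>2 + b\<^sup>2" "r\<^sup>2 = 1 + x\<^sup>2 + y\<^sup>2"
  shows "(p*r)\<^sup>2 - (1 + a*x + b*y)\<^sup>2 = (a - x)\<^sup>2 + (b - y)\<^sup>2 + (a*y - b*x)\<^sup>2"
proof -
  have "(p*r)\<^sup>2 = (1 + a\<^sup>2 + b\<^sup>2) * (1 + x\<^sup>2 + y\<^sup>2)"
    using assms by (simp add: power_mult_distrib)
  then show ?thesis by (simp add: power2_eq_square algebra_simps)
qed

lemma timelike_inner_eq_one:
  fixes p a b r x y :: real
  assumes p: "p\<^sup>2 = 1 + a\<^sup>2 + b\<^sup>2" and r: "r\<^sup>2 = 1 + x\<^sup>2 + y\<^sup>2"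
    and one: "p*r - a*x - b*y = 1"
  shows "(r, x, y) = (p, a, b)"
proof -
  have "p*r = 1 + a*x + b*y" using one by simp
  then have "(a - x)\<^sup>2 + (b - y)\<^sup>2 + (a*y - b*x)\<^sup>2 = 0"
    using timelike_lagrange[OF p r] by simp
  then have x: "x = a" and y: "y = b" by (simp_all add: sum_power2_eq_zero_iff add_nonneg_eq_0_iff)
  then have "r\<^sup>2 = p\<^sup>2" using p r by simp
  then have "r = p \<or> r = - p" by (simp only: power2_eq_iff)
  moreover have "r \<noteq> - p"
    using one p x y by (auto simp: power2_eq_square) (smt (verit) zero_le_square)
  ultimately show ?thesis using x y by simp
qed

lemma timelike_reverse_cauchy_schwarz:
  fixes p a b r x y :: real
  assumes p: "p\<^sup>2 = 1 + a\<^sup>2 + b\<^sup>2" and r: "r\<^sup>2 = 1 + x\<^sup>2 + y\<^sup>2"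
  shows "1 \<le> \<bar>p*r - a*x - b*y\<bar>"
    and "\<bar>p*r - a*x - b*y\<bar> = 1 \<Longrightarrow> (r, x, y) = (p, a, b) \<or> (r, x, y) = (-p, -a, -b)"
proof -
  have "(1 + a*x + b*y)\<^sup>2 \<le> (p*r)\<^sup>2"
    using timelike_lagrange[OF p r] zero_le_power2[of "a - x"] zero_le_power2[of "b - y"]
      zero_le_power2[of "a*y - b*x"] by linarith
  moreover have "(1 - a*x - b*y)\<^sup>2 \<le> (p*r)\<^sup>2"
  proof -
    have "(p*r)\<^sup>2 - (1 - a*x - b*y)\<^sup>2 = (a + x)\<^sup>2 + (b + y)\<^sup>2 + (b*x - a*y)\<^sup>2"
      using timelike_lagrange[of p a b r "-x" "-y"] p r by simp
    then show ?thesis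
      using zero_le_power2[of "a + x"] zero_le_power2[of "b + y"] zero_le_power2[of "b*x - a*y"]
      by linarith
  qed
  ultimately have "\<bar>1 + a*x + b*y\<bar> \<le> \<bar>p*r\<bar>" and "\<bar>1 - a*x - b*y\<bar> \<le> \<bar>p*r\<bar>"
    by (simp_all only: abs_le_square_iff)
  then have "1 + \<bar>a*x + b*y\<bar> \<le> \<bar>p*r\<bar>" by linarith
  then show "1 \<le> \<bar>p*r - a*x - b*y\<bar>"
    using abs_triangle_ineq2[of "p*r" "a*x + b*y"] by simp
  show "(r, x, y) = (p, a, b) \<or> (r, x, y) = (-p, -a, -b)"
    if "\<bar>p*r - a*x - b*y\<bar> = 1"
  proof (cases "p*r - a*x - b*y = 1")
    case True
    then show ?thesis using timelike_inner_eq_one[OF p r] by simp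
  next
    case False
    then have "p*(-r) - a*(-x) - b*(-y) = 1" using that by (simp add: abs_if split: if_splits)
    then show ?thesis using timelike_inner_eq_one[of p a b "-r" "-x" "-y"] p r by simp
  qed
qed

lemma half_turn_trace_mult:
  assumes "half_turn Q" "half_turn R"
  shows "2 \<le> \<bar>trace (Q ** R)\<bar>" and "\<bar>trace (Q ** R)\<bar> = 2 \<Longrightarrow> R = Q \<or> R = - Q"
proof -
  obtain a b c d where Q: "Q = matrix2 a b c d" by (rule matrix2_cases)
  obtain x y z w where R: "R = matrix2 x y z w" by (rule matrix2_cases)
  have d: "d = - a" using assms(1) unfolding Q half_turn_iff_trace by simp
  have w: "w = - x" using assms(2) unfolding R half_turn_iff_trace by simp
  have "- a*a - b*c = 1" "- x*x - y*z = 1"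
    using assms unfolding Q R d w half_turn_iff_trace by simp_all
  \<comment> \<open>The half-turn with entries a, b, c, -a is the unit timelike vector (p, a, q) of the
    Lorentzian form -det on trace-free matrices.\<close>
  define p q where "p = (b - c) / 2" and "q = - (b + c) / 2"
  define r k where "r = (y - z) / 2" and "k = - (y + z) / 2"
  have bc: "b = p - q" "c = - (p + q)" and yz: "y = r - k" "z = - (r + k)"
    unfolding p_def q_def r_def k_def by (simp_all add: field_simps)
  have "p\<^sup>2 = 1 + a\<^sup>2 + q\<^sup>2" and "r\<^sup>2 = 1 + x\<^sup>2 + k\<^sup>2"
    using \<open>- a*a - b*c = 1\<close> \<open>- x*x - y*z = 1\<close> unfolding bc yz
    by (simp_all add: power2_eq_square algebra_simps)
  note lorentz = timelike_reverse_cauchy_schwarz[OF this]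
  have tr: "\<bar>trace (Q ** R)\<bar> = 2 * \<bar>p*r - a*x - q*k\<bar>"
  proof -
    have "trace (Q ** R) = -2 * (p*r - a*x - q*k)"
      unfolding Q R d w bc yz by (simp add: algebra_simps)
    then show ?thesis by (simp only: abs_mult)
  qed
  show "2 \<le> \<bar>trace (Q ** R)\<bar>" using lorentz(1) unfolding tr by simp
  show "R = Q \<or> R = - Q" if "\<bar>trace (Q ** R)\<bar> = 2"
  proof -
    have "\<bar>p*r - a*x - q*k\<bar> = 1" using that unfolding tr by simp
    then consider "r = p" "x = a" "k = q" | "r = - p" "x = - a" "k = - q"
      using lorentz(2) by auto
    then show ?thesis unfolding Q R d w bc yz by cases simp_all
  qed
qed

lemma hyperbolic_half_turn_mult:
  assumes "half_turn Q" "half_turn R" "R \<noteq> Q" "R \<noteq> - Q"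
  shows "hyperbolic (Q ** R)"
  using half_turn_trace_mult[OF assms(1,2)] assms unfolding hyperbolic_def half_turn_def
  by (fastforce simp: det_mul)

lemma half_turns_mult_not_psl_eq_one:
  assumes "half_turn A" "half_turn B" "half_turn C"
  shows "\<not> psl_eq (A ** B ** C) (mat 1)"
proof
  assume "psl_eq (A ** B ** C) (mat 1)"
  then have "A ** (A ** B ** C) = A \<or> A ** (A ** B ** C) = - A"
    unfolding psl_eq_def by (auto simp: matrix_mul_uminus_right)
  then have "B ** C = A \<or> B ** C = - A"
    using assms(1) by (auto simp: matrix_mul_assoc[symmetric] half_turn_mult_self_assoc)
  then have "trace (B ** C) = 0"
    using assms(1) by (auto simp: half_turn_iff_trace trace_uminus)
  then show False using half_turn_trace_mult(1)[OF assms(2,3)] by simp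
qed

section \<open>One-parameter hyperbolic subgroups\<close>

lemma transl_len_pos: "hyperbolic A \<Longrightarrow> 0 < transl_len A"
  by (simp add: hyperbolic_def transl_len_def)

lemma exp_transl_len_sum:
  assumes "hyperbolic A"
  shows "exp (transl_len A / 2) + exp (- transl_len A / 2) = \<bar>trace A\<bar>"
proof -
  have "exp (transl_len A / 2) + exp (- transl_len A / 2) = 2 * cosh (arcosh (\<bar>trace A\<bar> / 2))"
    by (simp add: transl_len_def cosh_field_def)
  then show ?thesis using assms by (simp add: hyperbolic_def)
qed

lemma hyperbolic_square: "hyperbolic A \<Longrightarrow> hyperbolic (A ** A)"
proof -
  assume "hyperbolic A"
  then have "det A = 1" "2\<^sup>2 < (trace A)\<^sup>2"
    using abs_le_square_iff[of "trace A" 2] unfolding hyperbolic_def by auto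
  then show "hyperbolic (A ** A)" unfolding hyperbolic_def by (simp add: det_mul trace_square)
qed

lemma diag2_affine:
  assumes "\<mu> \<noteq> \<nu>"
  shows "diag2 u v = ((u * \<nu> - v * \<mu>) / (\<nu> - \<mu>)) *\<^sub>R mat 1 + ((v - u) / (\<nu> - \<mu>)) *\<^sub>R diag2 \<mu> \<nu>"
proof -
  have "\<nu> - \<mu> \<noteq> 0" using assms by simp
  then show ?thesis by (simp add: diag2_matrix2 mat1_matrix2 divide_simps) (simp add: algebra_simps)
qed

lemma eigenbasis_2:
  assumes "det (A::mat2) = 1" "trace A = \<mu> + \<nu>" "\<mu> * \<nu> = 1" "\<mu> \<noteq> \<nu>"
  shows "\<exists>P. det P \<noteq> 0 \<and> A ** P = P ** diag2 \<mu> \<nu>"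
proof -
  obtain a b c d where A: "A = matrix2 a b c d" by (rule matrix2_cases)
  have det: "a*d - b*c = 1" and tr: "a + d = \<mu> + \<nu>" using assms(1,2) unfolding A by simp_all
  show ?thesis
  proof (cases "b = 0")
    case False
    have "\<mu> * (a + d) = \<mu> * \<mu> + 1" "\<nu> * (a + d) = \<nu> * \<nu> + 1"
      unfolding tr using assms(3) by (simp_all add: distrib_left mult.commute)
    then have "c*b + d*(\<mu> - a) = (\<mu> - a)*\<mu>" "c*b + d*(\<nu> - a) = (\<nu> - a)*\<nu>"
      using det by (simp_all add: algebra_simps)
    then have "A ** matrix2 b b (\<mu> - a) (\<nu> - a) = matrix2 b b (\<mu> - a) (\<nu> - a) ** diag2 \<mu> \<nu>"
      unfolding A diag2_matrix2 by (simp add: algebra_simps)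
    moreover have "det (matrix2 b b (\<mu> - a) (\<nu> - a)) \<noteq> 0"
      using False assms(4) by (simp add: algebra_simps)
    ultimately show ?thesis by blast
  next
    case True
    have "(a - \<mu>) * (a - \<nu>) = a*a - a*(\<mu> + \<nu>) + \<mu> * \<nu>"
      by (simp add: algebra_simps)
    also have "\<dots> = 0"
      unfolding tr[symmetric] assms(3) using det True by (simp add: algebra_simps)
    finally have "(a - \<mu>) * (a - \<nu>) = 0" .
    then consider "a = \<mu>" "d = \<nu>" | "a = \<nu>" "d = \<mu>" using tr by auto
    then show ?thesis
    proof cases
      case 1
      then have "A ** matrix2 (a - d) 0 c 1 = matrix2 (a - d) 0 c 1 ** diag2 \<mu> \<nu>"
        unfolding A diag2_matrix2 using True by (simp add: algebra_simps)
      moreover have "det (matrix2 (a - d) 0 c 1) \<noteq> 0" using 1 assms(4) by simp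
      ultimately show ?thesis by blast
    next
      case 2
      then have "A ** matrix2 0 (a - d) 1 c = matrix2 0 (a - d) 1 c ** diag2 \<mu> \<nu>"
        unfolding A diag2_matrix2 using True by (simp add: algebra_simps)
      moreover have "det (matrix2 0 (a - d) 1 c) \<noteq> 0" using 2 assms(4) by simp
      ultimately show ?thesis by blast
    qed
  qed
qed

lemma diagonalize_2:
  assumes "det (A::mat2) = 1" "trace A = \<mu> + \<nu>" "\<mu> * \<nu> = 1" "\<mu> \<noteq> \<nu>"
  shows "\<exists>P. invertible P \<and> P ** diag2 \<mu> \<nu> ** matrix_inv P = A"
proof -
  obtain P where P: "invertible P" "A ** P = P ** diag2 \<mu> \<nu>"
    using eigenbasis_2[OF assms] by (auto simp: invertible_det_nz)
  then have "P ** diag2 \<mu> \<nu> ** matrix_inv P = A ** (P ** matrix_inv P)"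
    by (simp add: matrix_mul_assoc)
  then have "P ** diag2 \<mu> \<nu> ** matrix_inv P = A"
    by (simp add: matrix_inv_right P(1))
  with P(1) show ?thesis by blast
qed

lemma one_par_conj:
  assumes "hyperbolic A"
  obtains P where "invertible P"
    "psl_eq (P ** diag2 (exp (transl_len A / 2)) (exp (- transl_len A / 2)) ** matrix_inv P) A"
    "one_par A t = P ** diag2 (exp (t / 2)) (exp (- t / 2)) ** matrix_inv P"
proof -
  define \<mu> \<nu> where "\<mu> = exp (transl_len A / 2)" and "\<nu> = exp (- transl_len A / 2)"
  have "\<mu> * \<nu> = 1" unfolding \<mu>_def \<nu>_def by (simp flip: exp_add)
  moreover have "\<mu> \<noteq> \<nu>" using transl_len_pos[OF assms] unfolding \<mu>_def \<nu>_def by simp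
  \<comment> \<open>the sign of A is chosen so that its trace is \<mu> + \<nu> > 0\<close>
  moreover define A' where "A' = sgn (trace A) *\<^sub>R A"
  moreover have "det A' = 1" "trace A' = \<mu> + \<nu>"
    using assms exp_transl_len_sum[OF assms]
    unfolding A'_def \<mu>_def \<nu>_def hyperbolic_def by (auto simp: sgn_if det_2 trace_scaleR)
  ultimately obtain P where "invertible P" "P ** diag2 \<mu> \<nu> ** matrix_inv P = A'"
    using diagonalize_2 by metis
  moreover have "psl_eq A' A"
    using assms unfolding A'_def psl_eq_def hyperbolic_def by (auto simp: sgn_if)
  ultimately have "\<exists>M P. invertible P \<and> psl_eq (P ** diag2 \<mu> \<nu> ** matrix_inv P) A \<and>
      M = P ** diag2 (exp (t / 2)) (exp (- t / 2)) ** matrix_inv P"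
    by metis
  from someI_ex[OF this] show ?thesis
    using that unfolding one_par_def \<mu>_def \<nu>_def by blast
qed

lemma det_one_par: "hyperbolic A \<Longrightarrow> det (one_par A t) = 1"
  by (rule one_par_conj[of A t]) (simp_all add: det_conj diag2_matrix2 flip: exp_add)

lemma one_par_affine:
  assumes "hyperbolic A"
  obtains \<alpha> \<beta> where "one_par A t = \<alpha> *\<^sub>R mat 1 + \<beta> *\<^sub>R A"
proof -
  define \<mu> \<nu> where "\<mu> = exp (transl_len A / 2)" and "\<nu> = exp (- transl_len A / 2)"
  obtain P where P: "invertible P" "psl_eq (P ** diag2 \<mu> \<nu> ** matrix_inv P) A"
    "one_par A t = P ** diag2 (exp (t / 2)) (exp (- t / 2)) ** matrix_inv P"
    using one_par_conj[OF assms] unfolding \<mu>_def \<nu>_def by blast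
  have "\<mu> \<noteq> \<nu>" using transl_len_pos[OF assms] unfolding \<mu>_def \<nu>_def by simp
  then obtain \<alpha> \<beta> where "diag2 (exp (t / 2)) (exp (- t / 2)) = \<alpha> *\<^sub>R mat 1 + \<beta> *\<^sub>R diag2 \<mu> \<nu>"
    using diag2_affine by blast
  then have "one_par A t = \<alpha> *\<^sub>R mat 1 + \<beta> *\<^sub>R (P ** diag2 \<mu> \<nu> ** matrix_inv P)"
    unfolding P(3) using P(1)
    by (simp add: matrix_add_ldistrib matrix_add_rdistrib matrix_inv_right matrix_mul_assoc)
  with P(2) show ?thesis
    using that[of \<alpha> \<beta>] that[of \<alpha> "- \<beta>"] unfolding psl_eq_def by auto
qed

lemma one_par_commute:
  assumes "hyperbolic A" "X ** A = A ** X"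
  shows "X ** one_par A t = one_par A t ** X"
proof -
  obtain \<alpha> \<beta> where "one_par A t = \<alpha> *\<^sub>R mat 1 + \<beta> *\<^sub>R A" by (rule one_par_affine[OF assms(1)])
  then show ?thesis using assms(2) by (simp add: matrix_add_ldistrib matrix_add_rdistrib)
qed

lemma one_par_inverted:
  assumes "hyperbolic A" "Y ** A = matrix_inv A ** Y"
  shows "Y ** one_par A t = matrix_inv (one_par A t) ** Y"
proof -
  obtain \<alpha> \<beta> where M: "one_par A t = \<alpha> *\<^sub>R mat 1 + \<beta> *\<^sub>R A" by (rule one_par_affine[OF assms(1)])
  have "matrix_inv (one_par A t) = \<alpha> *\<^sub>R mat 1 + \<beta> *\<^sub>R matrix_inv A"
    using det_one_par[OF assms(1), of t] assms(1) unfolding M hyperbolic_def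
    by (simp add: matrix_inv_affine)
  then show ?thesis
    using assms(2) unfolding M by (simp add: matrix_add_ldistrib matrix_add_rdistrib)
qed

lemma one_par_uminus: "one_par (- A) t = one_par A t"
  unfolding one_par_def transl_len_def trace_uminus abs_minus_cancel psl_eq_uminus_right ..

lemma one_par_psl_eq: "psl_eq A B \<Longrightarrow> one_par A t = one_par B t"
  by (auto simp: psl_eq_def one_par_uminus)

lemma one_par_sandwich_half_turn_factor:
  assumes "half_turn Q" "half_turn R" "hyperbolic (Q ** R)" "Y = Q \<or> Y = R"
  shows "matrix_inv (one_par (Q ** R) t) ** Y ** matrix_inv (one_par (Q ** R) t) = Y"
proof -
  let ?M = "one_par (Q ** R) t"
  have "Y ** (Q ** R) = matrix_inv (Q ** R) ** Y"
    using assms by (auto simp: matrix_inv_mult invertible_half_turn matrix_inv_half_turn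
        matrix_mul_assoc[symmetric] half_turn_mult_self half_turn_mult_self_assoc
        matrix_mul_uminus_left matrix_mul_uminus_right)
  then have "Y ** ?M = matrix_inv ?M ** Y" by (rule one_par_inverted[OF assms(3)])
  then have "matrix_inv ?M ** Y ** matrix_inv ?M = Y ** (?M ** matrix_inv ?M)"
    by (simp add: matrix_mul_assoc)
  then show ?thesis
    using det_one_par[OF assms(3)] by (simp add: matrix_inv_right invertible_det1)
qed

section \<open>Normal form of the representations in P_5\<close>

definition normal_P5_lift :: "(nat \<Rightarrow> mat2) \<Rightarrow> bool" where
  "normal_P5_lift Q \<longleftrightarrow> half_turn (Q 1) \<and> half_turn (Q 2) \<and> half_turn (Q 3) \<and> half_turn (Q 4) \<and>
     half_turn (Q 6) \<and> Q 5 = mat 1 \<and> psl_eq (Q 1 ** Q 2 ** Q 3 ** Q 4 ** Q 6) (mat 1)"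

lemma normal_P5_liftD:
  assumes "normal_P5_lift Q"
  shows "half_turn (Q 1)" "half_turn (Q 2)" "half_turn (Q 3)" "half_turn (Q 4)" "half_turn (Q 6)"
    "Q 5 = mat 1" "psl_eq (Q 1 ** Q 2 ** Q 3 ** Q 4 ** Q 6) (mat 1)"
  using assms unfolding normal_P5_lift_def by auto

lemma comm_a1_b1_normal_P5_lift:
  assumes "normal_P5_lift Q"
  shows "comm (Q 3 ** Q 2) (Q 1 ** Q 2) = - ((Q 4 ** Q 6) ** (Q 4 ** Q 6))"
proof -
  \<comment> \<open>stated with Q (Suc 0), the simp normal form of Q 1\<close>
  note ht = normal_P5_liftD[OF assms, unfolded One_nat_def]
  note simps = matrix_mul_assoc[symmetric] matrix_mul_uminus_left matrix_mul_uminus_right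
    half_turn_mult_self_assoc[OF ht(1)] half_turn_mult_self_assoc[OF ht(2)]
    half_turn_mult_self_assoc[OF ht(3)] half_turn_mult_self_assoc[OF ht(4)]
    half_turn_mult_self_assoc[OF ht(5)]
  define W where "W = Q 3 ** Q 2 ** Q 1"
  have "W ** (Q 1 ** Q 2 ** Q 3 ** Q 4 ** Q 6) = - (Q 4 ** Q 6)"
    unfolding W_def by (simp add: simps)
  then have "Q 4 ** Q 6 = W \<or> Q 4 ** Q 6 = - W"
    using ht(7) unfolding psl_eq_def by (auto simp: matrix_mul_uminus_right)
  then have "(Q 4 ** Q 6) ** (Q 4 ** Q 6) = W ** W"
    by (auto simp: matrix_mul_uminus_left matrix_mul_uminus_right)
  moreover have "comm (Q 3 ** Q 2) (Q 1 ** Q 2) = - (W ** W)"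
    using ht unfolding comm_def W_def
    by (simp add: matrix_inv_mult invertible_half_turn matrix_inv_half_turn simps)
  ultimately show ?thesis by simp
qed

lemma hyperbolic_normal_P5_lift:
  assumes "normal_P5_lift Q"
  shows "hyperbolic (Q 3 ** Q 2)" "hyperbolic (Q 4 ** Q 6)"
proof -
  note ht = normal_P5_liftD[OF assms]
  have "Q 2 \<noteq> Q 3 \<and> Q 2 \<noteq> - Q 3"
  proof (rule ccontr)
    assume "\<not> ?thesis"
    then have "psl_eq (Q 1 ** Q 2 ** Q 3 ** Q 4 ** Q 6) (Q 1 ** Q 4 ** Q 6)"
      using ht(3) unfolding psl_eq_def
      by (auto simp: matrix_mul_assoc[symmetric] half_turn_mult_self_assoc
          matrix_mul_uminus_left matrix_mul_uminus_right)
    then show False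
      using ht(7) half_turns_mult_not_psl_eq_one[OF ht(1,4,5)]
      by (blast intro: psl_eq_trans psl_eq_sym)
  qed
  then show "hyperbolic (Q 3 ** Q 2)" using hyperbolic_half_turn_mult[OF ht(3,2)] by simp
  have "Q 6 \<noteq> Q 4 \<and> Q 6 \<noteq> - Q 4"
  proof (rule ccontr)
    assume "\<not> ?thesis"
    then have "psl_eq (Q 1 ** Q 2 ** Q 3 ** Q 4 ** Q 6) (Q 1 ** Q 2 ** Q 3)"
      using ht(4) unfolding psl_eq_def
      by (auto simp: matrix_mul_assoc[symmetric] half_turn_mult_self_assoc half_turn_mult_self
          matrix_mul_uminus_left matrix_mul_uminus_right)
    then show False
      using ht(7) half_turns_mult_not_psl_eq_one[OF ht(1,2,3)]
      by (blast intro: psl_eq_trans psl_eq_sym)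
  qed
  then show "hyperbolic (Q 4 ** Q 6)" using hyperbolic_half_turn_mult[OF ht(4,5)] by simp
qed

lemma restrict_rep_psl_eq:
  "(\<And>i. psl_eq (Q i) (Q' i)) \<Longrightarrow> psl_eq (restrict_rep Q g) (restrict_rep Q' g)"
  by (cases g) (simp_all add: restrict_rep_def psl_eq_mult)

lemma restrict_rep_conj:
  assumes "invertible C"
  shows "restrict_rep (\<lambda>i. C ** Q i ** matrix_inv C) g = C ** restrict_rep Q g ** matrix_inv C"
  using assms by (cases g) (simp_all add: restrict_rep_def conj_mult)

lemma normal_P5_lift_of_in_P5:
  assumes "in_P5 \<rho>"
  obtains Q where "normal_P5_lift Q" "\<forall>g. psl_eq (restrict_rep Q g) (\<rho> g)"
proof -
  obtain Q C where orb: "orbifold_rep Q" and Q5: "psl_eq (Q 5) (mat 1)"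
    and nontriv: "\<forall>i\<in>{1..6}. i \<noteq> 5 \<longrightarrow> \<not> psl_eq (Q i) (mat 1)"
    and "det C = 1" and R: "\<forall>g. psl_eq (C ** restrict_rep Q g ** matrix_inv C) (\<rho> g)"
    using assms unfolding in_P5_def conj_equiv_def by blast
  then have C: "invertible C" by (simp add: invertible_det1)
  have ht: "half_turn (Q i)" if "i \<in> {1..6}" "i \<noteq> 5" for i
    using orb nontriv that half_turn_if_order_two unfolding orbifold_rep_def by blast
  define Q' where "Q' i = (if i = 5 then mat 1 else C ** Q i ** matrix_inv C)" for i
  have Q'_conj: "psl_eq (Q' i) (C ** Q i ** matrix_inv C)" for i
    using psl_eq_conj[OF Q5, of C] C
    unfolding Q'_def by (auto simp: matrix_inv_right intro: psl_eq_sym)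
  have "psl_eq (Q' 1 ** Q' 2 ** Q' 3 ** Q' 4 ** Q' 5 ** Q' 6)
      (C ** (Q 1 ** Q 2 ** Q 3 ** Q 4 ** Q 5 ** Q 6) ** matrix_inv C)"
    using Q'_conj C by (simp add: psl_eq_mult conj_mult flip: conj_mult)
  moreover have "psl_eq (C ** (Q 1 ** Q 2 ** Q 3 ** Q 4 ** Q 5 ** Q 6) ** matrix_inv C) (mat 1)"
    using psl_eq_conj[of _ "mat 1" C] orb C unfolding orbifold_rep_def
    by (simp add: matrix_inv_right)
  ultimately have "psl_eq (Q' 1 ** Q' 2 ** Q' 3 ** Q' 4 ** Q' 6) (mat 1)"
    by (auto simp: Q'_def intro: psl_eq_trans)
  then have "normal_P5_lift Q'"
    using ht C unfolding normal_P5_lift_def by (simp add: Q'_def half_turn_conj)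
  moreover have "psl_eq (restrict_rep Q' g) (\<rho> g)" for g
  proof -
    have "psl_eq (restrict_rep Q' g) (restrict_rep (\<lambda>i. C ** Q i ** matrix_inv C) g)"
      by (rule restrict_rep_psl_eq) (rule Q'_conj)
    then show ?thesis using R restrict_rep_conj[OF C] by (auto intro: psl_eq_trans)
  qed
  ultimately show ?thesis using that by blast
qed

lemma in_P5_of_normal_P5_lift:
  assumes Q: "normal_P5_lift Q" and lift: "\<forall>g. psl_eq (restrict_rep Q g) (\<rho> g)"
    and det: "\<forall>g. det (\<rho> g) = 1"
  shows "in_P5 \<rho>"
proof -
  note ht = normal_P5_liftD[OF Q]
  have "comm (Q 3 ** Q 2) (Q 1 ** Q 2) = comm (\<rho> a1) (\<rho> b1)"
    and "comm (Q 6) (Q 4) = comm (\<rho> a2) (\<rho> b2)"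
    using lift[rule_format, of a1] lift[rule_format, of b1] lift[rule_format, of a2]
      lift[rule_format, of b2] ht(6) det
    by (auto simp: restrict_rep_def invertible_det1 intro!: comm_psl_eq)
  moreover have "comm (Q 3 ** Q 2) (Q 1 ** Q 2) ** comm (Q 6) (Q 4) = - mat 1"
    using ht(4,5) unfolding comm_a1_b1_normal_P5_lift[OF Q]
    by (simp add: comm_def matrix_inv_half_turn half_turn_mult_self half_turn_mult_self_assoc
        matrix_mul_assoc[symmetric] matrix_mul_uminus_left matrix_mul_uminus_right)
  ultimately have "surface_rep \<rho>"
    using det unfolding surface_rep_def psl_eq_def by metis
  moreover have "orbifold_rep Q"
    using ht unfolding orbifold_rep_def half_turn_def psl_eq_def
    by (auto simp: atLeastAtMost_iff numeral_eq_Suc le_Suc_eq)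
  moreover have "\<forall>i\<in>{1..6}. i \<noteq> 5 \<longrightarrow> \<not> psl_eq (Q i) (mat 1)"
    using ht by (auto simp: atLeastAtMost_iff le_Suc_eq numeral_eq_Suc half_turn_not_psl_eq_one)
  moreover have "conj_equiv (restrict_rep Q) \<rho>"
    unfolding conj_equiv_def using lift by (intro exI[of _ "mat 1"]) (simp add: matrix_inv_unique)
  ultimately show ?thesis using ht(6) unfolding in_P5_def by auto
qed

section \<open>Invariance of P_5 under the two flows\<close>

lemma in_P5_flow_a1:
  assumes Q: "normal_P5_lift Q" and lift: "\<forall>g. psl_eq (restrict_rep Q g) (\<rho> g)"
    and det: "\<forall>g. det (\<rho> g) = 1"
  shows "in_P5 (flow_a1 t \<rho>)"
proof -
  note ht = normal_P5_liftD[OF Q]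
  have lift_a1: "psl_eq (\<rho> a1) (Q 3 ** Q 2)" and lift_b1: "psl_eq (Q 1 ** Q 2) (\<rho> b1)"
    using lift[rule_format, of a1] lift[rule_format, of b1]
    unfolding restrict_rep_def by (auto intro: psl_eq_sym)
  define N where "N = matrix_inv (one_par (Q 3 ** Q 2) t)"
  have flow: "flow_a1 t \<rho> = \<rho>(b1 := \<rho> b1 ** N)"
    unfolding flow_a1_def N_def one_par_psl_eq[OF lift_a1] ..
  have "det N = 1"
    using det_one_par[OF hyperbolic_normal_P5_lift(1)[OF Q]]
    unfolding N_def by (simp add: invertible_det1 det_matrix_inv)
  have fixed: "N ** Q 2 ** N = Q 2" "N ** Q 3 ** N = Q 3"
    using one_par_sandwich_half_turn_factor[OF ht(3,2) hyperbolic_normal_P5_lift(1)[OF Q]]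
    unfolding N_def by simp_all
  define Q' where "Q' = Q(2 := Q 2 ** N, 3 := Q 3 ** N)"
  have "Q 1 ** (Q 2 ** N) ** (Q 3 ** N) = Q 1 ** Q 2 ** (N ** Q 3 ** N)"
    by (simp add: matrix_mul_assoc)
  then have "normal_P5_lift Q'"
    using Q fixed half_turn_mult_sandwich[OF _ _ \<open>det N = 1\<close>] ht(2,3)
    unfolding normal_P5_lift_def Q'_def by simp
  moreover have "psl_eq (restrict_rep Q' g) (flow_a1 t \<rho> g)" for g
    using lift[rule_format, of g]
  proof (cases g)
    case a1
    have "Q 3 ** N ** (Q 2 ** N) = Q 3 ** (N ** Q 2 ** N)" by (simp add: matrix_mul_assoc)
    then show ?thesis
      using lift[rule_format, of a1] fixed a1 unfolding flow Q'_def restrict_rep_def by simp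
  next
    case b1
    then show ?thesis using psl_eq_mult[OF lift_b1 psl_eq_refl]
      unfolding flow Q'_def restrict_rep_def by (simp add: matrix_mul_assoc)
  qed (simp_all add: flow Q'_def restrict_rep_def)
  moreover have "det (flow_a1 t \<rho> g) = 1" for g
    using det \<open>det N = 1\<close> unfolding flow by (simp add: det_mul)
  ultimately show ?thesis by (blast intro: in_P5_of_normal_P5_lift)
qed

lemma in_P5_flow_comm:
  assumes Q: "normal_P5_lift Q" and lift: "\<forall>g. psl_eq (restrict_rep Q g) (\<rho> g)"
    and det: "\<forall>g. det (\<rho> g) = 1"
  shows "in_P5 (flow_comm t \<rho>)"
proof -
  note ht = normal_P5_liftD[OF Q]
  define V where "V = Q 4 ** Q 6"
  have "comm (\<rho> a1) (\<rho> b1) = - (V ** V)"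
  proof -
    have "comm (Q 3 ** Q 2) (Q 1 ** Q 2) = comm (\<rho> a1) (\<rho> b1)"
      using lift[rule_format, of a1] lift[rule_format, of b1] det
      unfolding restrict_rep_def by (auto simp: invertible_det1 intro!: comm_psl_eq)
    then show ?thesis using comm_a1_b1_normal_P5_lift[OF Q] unfolding V_def by simp
  qed
  then have "one_par (comm (\<rho> a1) (\<rho> b1)) t = one_par (V ** V) t"
    by (simp add: one_par_uminus)
  moreover define Z where "Z = one_par (V ** V) t"
  ultimately have flow:
    "flow_comm t \<rho> = \<rho>(a2 := Z ** \<rho> a2 ** matrix_inv Z, b2 := Z ** \<rho> b2 ** matrix_inv Z)"
    unfolding flow_comm_def Let_def by simp
  have VV: "hyperbolic (V ** V)"
    unfolding V_def by (rule hyperbolic_square[OF hyperbolic_normal_P5_lift(2)[OF Q]])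
  then have Z: "invertible Z" "det Z = 1"
    unfolding Z_def by (simp_all add: det_one_par invertible_det1)
  have "V ** Z = Z ** V"
    unfolding Z_def by (rule one_par_commute[OF VV]) (simp add: matrix_mul_assoc)
  then have "(Z ** Q 4 ** matrix_inv Z) ** (Z ** Q 6 ** matrix_inv Z) = V"
    unfolding V_def by (rule conj_mult_commuting[OF Z(1)])
  then have product:
    "Q 1 ** Q 2 ** Q 3 ** (Z ** Q 4 ** matrix_inv Z) ** (Z ** Q 6 ** matrix_inv Z) =
      Q 1 ** Q 2 ** Q 3 ** Q 4 ** Q 6"
    unfolding V_def by (simp only: matrix_mul_assoc[of "Q 1 ** Q 2 ** Q 3", symmetric])
  define Q' where "Q' = Q(4 := Z ** Q 4 ** matrix_inv Z, 6 := Z ** Q 6 ** matrix_inv Z)"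
  have "normal_P5_lift Q'"
    using Q product unfolding normal_P5_lift_def Q'_def
    by (simp add: half_turn_conj[OF Z(1)])
  moreover have "psl_eq (restrict_rep Q' g) (flow_comm t \<rho> g)" for g
    using lift[rule_format, of g] ht(6)
    by (cases g) (simp_all add: flow Q'_def restrict_rep_def psl_eq_conj)
  moreover have "det (flow_comm t \<rho> g) = 1" for g
    using det Z unfolding flow by (simp add: det_conj)
  ultimately show ?thesis by (blast intro: in_P5_of_normal_P5_lift)
qed

theorem mainTheorem3:
  fixes \<rho> :: "gen \<Rightarrow> mat2" and t :: real
  assumes "in_P5 \<rho>"
  shows "in_P5 (flow_a1 t \<rho>) \<and> in_P5 (flow_comm t \<rho>)"
proof -
  obtain Q where "normal_P5_lift Q" "\<forall>g. psl_eq (restrict_rep Q g) (\<rho> g)"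
    using normal_P5_lift_of_in_P5[OF assms] by blast
  moreover have "\<forall>g. det (\<rho> g) = 1" using assms unfolding in_P5_def surface_rep_def by blast
  ultimately show ?thesis using in_P5_flow_a1 in_P5_flow_comm by blast
qed

end
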